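(* Define $\alpha\equiv\beta$ on $\mathrm{Form}$ by: $\vdash\alpha\to\beta$ and $\vdash\beta\to\alpha$ in the calculus $\mathcal{L}_\Delta$ below. Then (a) $\equiv$ is a congruence on $\mathrm{Form}$ regarded as an $\{\delta,\oplus,\neg,0\}$-algebra (with $\alpha\oplus\beta:=\neg\alpha\to\beta$ and $0:=\neg(\alpha_0\to\alpha_0)$ for a fixed formula $\alpha_0$); and (b) the quotient $\mathrm{Form}/{\equiv}$ is a $\delta$-algebra.
   Context: MV-algebras: algebras $(A,\oplus,\neg,0)$ of type $(2,1,0)$ with $(A,\oplus,0)$ a commutative monoid, $\neg\neg a=a$, $a\oplus\neg0=\neg0$, $\neg(\neg a\oplus b)\oplus b=\neg(\neg b\oplus a)\oplus a$; derived $1:=\neg0$, $a\odot b:=\neg(\neg a\oplus\neg b)$, $a\ominus b:=a\odot\neg b$, $a\vee b:=\neg(\neg a\oplus b)\oplus b$ (join of a lattice order $\le$), $d(a,b):=(a\ominus b)\oplus(b\ominus a)$. A $\delta$-algebra is an algebra $(A,\delta,\oplus,\neg,0)$ of type $(\omega,2,1,0)$ whose MV-reduct is an MV-algebra, satisfying, with $\tfrac12(x):=\delta(x,0,0,\dots)$: (i) $d(\delta(\vec x),\delta(x_1,0,0,\dots))=\delta(0,x_2,x_3,\dots)$; (ii) $\tfrac12(\delta(\vec x))=\delta(\tfrac12(x_1),\tfrac12(x_2),\dots)$; (iii) $\delta(x,x,\dots)=x$; (iv) $\delta(0,\vec x)=\tfrac12(\delta(\vec x))$; (v) $\delta(\vec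 x)\le\delta(x_1\oplus y_1,x_2\oplus y_2,\dots)$; (vi) $\tfrac12(x\ominus y)=\tfrac12(x)\ominus\tfrac12(y)$. Formulas: $\mathrm{Form}$ is the least set containing a fixed countably infinite set of propositional variables and closed under $\alpha\to\beta$, $\neg\alpha$, and $\delta(\langle\alpha_i\rangle)$ for every sequence $\langle\alpha_i\rangle=\alpha_1,\alpha_2,\dots$ indexed by $\omega$. Notation: $\langle\alpha\rangle$ is the constant sequence of value $\alpha$; $\alpha,\langle\beta_i\rangle$ is $\alpha,\beta_1,\beta_2,\dots$; $\langle\alpha_i\rangle_{i>1}$ is $\alpha_2,\alpha_3,\dots$; $\tfrac12\alpha:=\delta(\alpha,\langle\neg(\alpha\to\alpha)\rangle)$; a schema $\alpha\leftrightarrow\beta$ stands for the two schemas $\alpha\to\beta$ and $\beta\to\alpha$. The calculus $\mathcal{L}_\Delta$ has axiom schemata (for all formulas): (Ł1) $\alpha\to(\beta\to\alpha)$; (Ł2) $(\alpha\to\beta)\to((\beta\to\gamma)\to(\alpha\to\gamma))$; (Ł3) $((\alpha\to\beta)\to\beta)\to((\beta\to\alpha)\to\alpha)$; (Ł4) $(\neg\alpha\to\neg\beta)\to(\beta\to\alpha)$; (Δ1) $\neg(\delta(\langle\alpha_i\rangle)\to\tfrac12\alpha_1)\leftrightarrow\tfrac12\delta(\langle\alpha_i\rangle_{i>1})$; (Δ2) $\tfrac12\delta(\langle\alpha_i\rangle)\leftrightarrow\delta(\langle\tfrac12\alpha_i\rangle)$; (Δ3) $\delta(\langle\alpha\rangle)\leftrightarrow\alpha$;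 (Δ4) $\tfrac12\delta(\langle\alpha_i\rangle)\leftrightarrow\delta(\neg(\alpha\to\alpha),\langle\alpha_i\rangle)$; (Δ5) $\delta(\langle\alpha_i\rangle)\to\delta(\langle\neg\alpha_i\to\beta_i\rangle)$; (Δ6) $\tfrac12\neg(\alpha\to\beta)\leftrightarrow\neg(\tfrac12\alpha\to\tfrac12\beta)$; (Δ7) $\delta(\langle\alpha_i\to\beta_i\rangle)\to(\delta(\langle\alpha_i\rangle)\to\delta(\langle\beta_i\rangle))$. Rules: Modus Ponens (from $\alpha$ and $\alpha\to\beta$ infer $\beta$) and the $\delta$-rule (from $\alpha_i$ for all $i\in\omega$ infer $\delta(\langle\alpha_i\rangle)$). A proof of $\alpha$ from $\Theta\subseteq\mathrm{Form}$ is a sequence $(\alpha_i)_{i\in\eta+1}$ of formulas indexed by a successor ordinal $\eta+1$ with $\eta$ countable, such that $\alpha_\eta=\alpha$ and each member is an axiom, an element of $\Theta$, or obtained from earlier members by one of the rules. $\Theta^\vdash$ is the set of formulas provable from $\Theta$; $\vdash\alpha$ means $\alpha\in\emptyset^\vdash$. *)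

theory Defs
  imports Main
begin

text \<open>Sequences indexed by omega are functions nat => form; index 0 is the
  first member alpha_1 of the paper's sequence.\<close>

datatype form = Var nat | Imp form form | Neg form | Delta "nat \<Rightarrow> form"

definition fhalf :: "form \<Rightarrow> form" where
  "fhalf a = Delta (\<lambda>i. if i = 0 then a else Neg (Imp a a))"

definition Iff_axs :: "form \<Rightarrow> form \<Rightarrow> form set" where
  "Iff_axs a b = {Imp a b, Imp b a}"

inductive axiom :: "form \<Rightarrow> bool" where
  L1: "axiom (Imp a (Imp b a))"
| L2: "axiom (Imp (Imp a b) (Imp (Imp b c) (Imp a c)))"
| L3: "axiom (Imp (Imp (Imp a b) b) (Imp (Imp b a) a))"
| L4: "axiom (Imp (Imp (Neg a) (Neg b)) (Imp b a))"
| D1: "f \<in> Iff_axs (Neg (Imp (Delta as) (fhalf (as 0)))) (fhalf (Delta (\<lambda>i. as (Suc i)))) \<Longrightarrow> axiom f"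
| D2: "f \<in> Iff_axs (fhalf (Delta as)) (Delta (\<lambda>i. fhalf (as i))) \<Longrightarrow> axiom f"
| D3: "f \<in> Iff_axs (Delta (\<lambda>i. a)) a \<Longrightarrow> axiom f"
| D4: "f \<in> Iff_axs (fhalf (Delta as))
          (Delta (\<lambda>i. if i = 0 then Neg (Imp a a) else as (i - 1))) \<Longrightarrow> axiom f"
| D5: "axiom (Imp (Delta as) (Delta (\<lambda>i. Imp (Neg (as i)) (bs i))))"
| D6: "f \<in> Iff_axs (fhalf (Neg (Imp a b))) (Neg (Imp (fhalf a) (fhalf b))) \<Longrightarrow> axiom f"
| D7: "axiom (Imp (Delta (\<lambda>i. Imp (as i) (bs i))) (Imp (Delta as) (Delta bs)))"

inductive_set provable :: "form set \<Rightarrow> form set" for Theta :: "form set" where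
  ax: "axiom a \<Longrightarrow> a \<in> provable Theta"
| hyp: "a \<in> Theta \<Longrightarrow> a \<in> provable Theta"
| mp: "a \<in> provable Theta \<Longrightarrow> Imp a b \<in> provable Theta \<Longrightarrow> b \<in> provable Theta"
| delta: "(\<And>i. as i \<in> provable Theta) \<Longrightarrow> Delta as \<in> provable Theta"

definition prov :: "form \<Rightarrow> bool" where
  "prov a \<longleftrightarrow> a \<in> provable {}"

definition feqv :: "form \<Rightarrow> form \<Rightarrow> bool" where
  "feqv a b \<longleftrightarrow> prov (Imp a b) \<and> prov (Imp b a)"

definition feqv_rel :: "(form \<times> form) set" where
  "feqv_rel = {(a, b). feqv a b}"

definition fplus :: "form \<Rightarrow> form \<Rightarrow> form" where
  "fplus a b = Imp (Neg a) b"

definition fzero :: "form \<Rightarrow> form" where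
  "fzero a0 = Neg (Imp a0 a0)"

definition mv_algebra :: "'a set \<Rightarrow> ('a \<Rightarrow> 'a \<Rightarrow> 'a) \<Rightarrow> ('a \<Rightarrow> 'a) \<Rightarrow> 'a \<Rightarrow> bool" where
  "mv_algebra A pl ng z \<longleftrightarrow>
     z \<in> A \<and> (\<forall>a\<in>A. \<forall>b\<in>A. pl a b \<in> A) \<and> (\<forall>a\<in>A. ng a \<in> A) \<and>
     (\<forall>a\<in>A. \<forall>b\<in>A. \<forall>c\<in>A. pl (pl a b) c = pl a (pl b c)) \<and>
     (\<forall>a\<in>A. \<forall>b\<in>A. pl a b = pl b a) \<and>
     (\<forall>a\<in>A. pl a z = a) \<and>
     (\<forall>a\<in>A. ng (ng a) = a) \<and>
     (\<forall>a\<in>A. pl a (ng z) = ng z) \<and>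
     (\<forall>a\<in>A. \<forall>b\<in>A. pl (ng (pl (ng a) b)) b = pl (ng (pl (ng b) a)) a)"

definition mv_minus :: "('a \<Rightarrow> 'a \<Rightarrow> 'a) \<Rightarrow> ('a \<Rightarrow> 'a) \<Rightarrow> 'a \<Rightarrow> 'a \<Rightarrow> 'a" where
  "mv_minus pl ng a b = ng (pl (ng a) (ng (ng b)))"  \<comment> \<open>a \<odot> \<not>b = \<not>(\<not>a \<oplus> \<not>\<not>b)\<close>

definition mv_join :: "('a \<Rightarrow> 'a \<Rightarrow> 'a) \<Rightarrow> ('a \<Rightarrow> 'a) \<Rightarrow> 'a \<Rightarrow> 'a \<Rightarrow> 'a" where
  "mv_join pl ng a b = pl (ng (pl (ng a) b)) b"

definition mv_le :: "('a \<Rightarrow> 'a \<Rightarrow> 'a) \<Rightarrow> ('a \<Rightarrow> 'a) \<Rightarrow> 'a \<Rightarrow> 'a \<Rightarrow> bool" where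
  "mv_le pl ng a b \<longleftrightarrow> mv_join pl ng a b = b"

definition mv_dist :: "('a \<Rightarrow> 'a \<Rightarrow> 'a) \<Rightarrow> ('a \<Rightarrow> 'a) \<Rightarrow> 'a \<Rightarrow> 'a \<Rightarrow> 'a" where
  "mv_dist pl ng a b = pl (mv_minus pl ng a b) (mv_minus pl ng b a)"

definition delta_algebra ::
  "'a set \<Rightarrow> ((nat \<Rightarrow> 'a) \<Rightarrow> 'a) \<Rightarrow> ('a \<Rightarrow> 'a \<Rightarrow> 'a) \<Rightarrow> ('a \<Rightarrow> 'a) \<Rightarrow> 'a \<Rightarrow> bool" where
  "delta_algebra A dl pl ng z \<longleftrightarrow>
     (let half = (\<lambda>x. dl (\<lambda>i. if i = 0 then x else z));
          mn = mv_minus pl ng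
      in mv_algebra A pl ng z \<and>
     (\<forall>x. (\<forall>i. x i \<in> A) \<longrightarrow> dl x \<in> A) \<and>
     (\<forall>x. (\<forall>i. x i \<in> A) \<longrightarrow>
        mv_dist pl ng (dl x) (half (x 0)) = dl (\<lambda>i. if i = 0 then z else x i)) \<and>
     (\<forall>x. (\<forall>i. x i \<in> A) \<longrightarrow> half (dl x) = dl (\<lambda>i. half (x i))) \<and>
     (\<forall>x\<in>A. dl (\<lambda>i. x) = x) \<and>
     (\<forall>x. (\<forall>i. x i \<in> A) \<longrightarrow> dl (\<lambda>i. if i = 0 then z else x (i - 1)) = half (dl x)) \<and>
     (\<forall>x y. (\<forall>i. x i \<in> A) \<longrightarrow> (\<forall>i. y i \<in> A) \<longrightarrow>
        mv_le pl ng (dl x) (dl (\<lambda>i. pl (x i) (y i)))) \<and>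
     (\<forall>x\<in>A. \<forall>y\<in>A. half (mn x y) = mn (half x) (half y)))"

definition fclass :: "form \<Rightarrow> form set" where
  "fclass a = feqv_rel `` {a}"

definition frep :: "form set \<Rightarrow> form" where
  "frep X = (SOME a. a \<in> X)"

definition Q_carrier :: "form set set" where
  "Q_carrier = UNIV // feqv_rel"

definition Q_plus :: "form set \<Rightarrow> form set \<Rightarrow> form set" where
  "Q_plus X Y = fclass (fplus (frep X) (frep Y))"

definition Q_neg :: "form set \<Rightarrow> form set" where
  "Q_neg X = fclass (Neg (frep X))"

definition Q_zero :: "form \<Rightarrow> form set" where
  "Q_zero a0 = fclass (fzero a0)"

definition Q_delta :: "(nat \<Rightarrow> form set) \<Rightarrow> form set" where
  "Q_delta Xs = fclass (Delta (\<lambda>i. frep (Xs i)))"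

end

theory Submission
  imports Defs
begin

text \<open>This is the Lindenbaum--Tarski construction. The axioms (L1)--(L4) give, as for
  Lukasiewicz logic, the derived rules showing that \<open>\<equiv>\<close> is an equivalence compatible with
  \<open>\<rightarrow>\<close> and \<open>\<not>\<close>; the \<open>\<delta>\<close>-rule applied to the componentwise implications, followed by
  (\<Delta>7), makes it compatible with \<open>\<delta>\<close> as well. The quotient is then the Lindenbaum algebra
  of Lukasiewicz logic, hence an MV-algebra, and each defining identity of \<open>\<delta>\<close>-algebras is
  the image of one of the axioms (\<Delta>1)--(\<Delta>6). Only identity (i) needs an argument:
  (\<Delta>5) yields \<open>\<turnstile> \<onehalf>\<alpha>\<^sub>1 \<rightarrow> \<delta>(\<alpha>\<^sub>1, \<alpha>\<^sub>2, \<dots>)\<close>, so one summand of the distance vanishes,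
  and the other is computed by (\<Delta>1) and (\<Delta>4).\<close>

section \<open>Derived rules of the calculus\<close>

lemma prov_axiom: "axiom a \<Longrightarrow> prov a"
  by (simp add: prov_def provable.ax)

lemma prov_mp: "prov a \<Longrightarrow> prov (Imp a b) \<Longrightarrow> prov b"
  unfolding prov_def by (rule provable.mp)

lemma prov_Delta: "(\<And>i. prov (as i)) \<Longrightarrow> prov (Delta as)"
  unfolding prov_def by (rule provable.delta)

lemma prov_weaken: "prov (Imp a (Imp b a))"
  by (rule prov_axiom, rule axiom.L1)

lemma prov_suffixing: "prov (Imp (Imp a b) (Imp (Imp b c) (Imp a c)))"
  by (rule prov_axiom, rule axiom.L2)

lemma prov_luk: "prov (Imp (Imp (Imp a b) b) (Imp (Imp b a) a))"
  by (rule prov_axiom, rule axiom.L3)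

lemma prov_Neg_contrapos: "prov (Imp (Imp (Neg a) (Neg b)) (Imp b a))"
  by (rule prov_axiom, rule axiom.L4)

lemma prov_imp_trans: "prov (Imp a b) \<Longrightarrow> prov (Imp b c) \<Longrightarrow> prov (Imp a c)"
  by (meson prov_suffixing prov_mp)

lemmas [trans] = prov_imp_trans

lemma prov_suffix_rule: "prov (Imp a b) \<Longrightarrow> prov (Imp (Imp b c) (Imp a c))"
  by (meson prov_suffixing prov_mp)

lemma prov_assertion: "prov (Imp a (Imp (Imp a b) b))"
  using prov_mp[OF prov_luk prov_suffix_rule[OF prov_weaken]] .

lemma prov_imp_refl: "prov (Imp a a)"
proof -
  let ?K = "Imp a (Imp a a)"
  have "prov (Imp (Imp ?K a) a)"
    by (rule prov_mp[OF prov_weaken prov_assertion])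
  then show ?thesis
    using prov_mp[OF _ prov_suffix_rule[OF prov_weaken[of a ?K]]] by blast
qed

lemma prov_imp_of_prov: "prov p \<Longrightarrow> prov (Imp (Imp p x) x)"
  using prov_mp prov_assertion by blast

lemma prov_exchange: "prov (Imp (Imp a (Imp b c)) (Imp b (Imp a c)))"
  by (rule prov_imp_trans[OF prov_suffixing prov_suffix_rule[OF prov_assertion]])

lemma prov_prefix_rule: "prov (Imp b c) \<Longrightarrow> prov (Imp (Imp a b) (Imp a c))"
  by (meson prov_suffixing prov_mp prov_exchange)

lemma prov_dneg_elim: "prov (Imp (Neg (Neg a)) a)"
proof -
  let ?t = "Imp a a"
  have "prov (Imp (Neg (Neg a)) (Imp (Neg (Neg ?t)) (Neg (Neg a))))"
    by (rule prov_weaken)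
  also have "prov (Imp (Imp (Neg (Neg ?t)) (Neg (Neg a))) (Imp (Neg a) (Neg ?t)))"
    by (rule prov_Neg_contrapos)
  also have "prov (Imp (Imp (Neg a) (Neg ?t)) (Imp ?t a))"
    by (rule prov_Neg_contrapos)
  also have "prov (Imp (Imp ?t a) a)"
    by (rule prov_imp_of_prov[OF prov_imp_refl])
  finally show ?thesis .
qed

lemma prov_dneg_intro: "prov (Imp a (Neg (Neg a)))"
  by (rule prov_mp[OF prov_dneg_elim prov_Neg_contrapos])

lemma prov_contrapos: "prov (Imp (Imp a b) (Imp (Neg b) (Neg a)))"
proof -
  have "prov (Imp (Imp a b) (Imp (Neg (Neg a)) b))"
    by (rule prov_suffix_rule[OF prov_dneg_elim])
  also have "prov (Imp (Imp (Neg (Neg a)) b) (Imp (Neg (Neg a)) (Neg (Neg b))))"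
    by (rule prov_prefix_rule[OF prov_dneg_intro])
  also have "prov (Imp (Imp (Neg (Neg a)) (Neg (Neg b))) (Imp (Neg b) (Neg a)))"
    by (rule prov_Neg_contrapos)
  finally show ?thesis .
qed

section \<open>Provable equivalence\<close>

lemma feqv_refl: "feqv a a"
  by (simp add: feqv_def prov_imp_refl)

lemma feqv_sym: "feqv a b \<Longrightarrow> feqv b a"
  by (simp add: feqv_def)

lemma feqv_trans: "feqv a b \<Longrightarrow> feqv b c \<Longrightarrow> feqv a c"
  by (meson feqv_def prov_imp_trans)

lemmas [trans] = feqv_trans

lemma equiv_feqv_rel: "equiv UNIV feqv_rel"
  unfolding feqv_rel_def
  by (rule equivI) (auto intro!: refl_onI symI transI intro: feqv_refl feqv_sym feqv_trans)

lemma feqv_Imp: "feqv a b \<Longrightarrow> feqv c d \<Longrightarrow> feqv (Imp a c) (Imp b d)"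
  unfolding feqv_def by (meson prov_suffix_rule prov_prefix_rule prov_imp_trans)

lemma feqv_Neg: "feqv a b \<Longrightarrow> feqv (Neg a) (Neg b)"
  unfolding feqv_def by (meson prov_contrapos prov_mp)

lemma feqv_fplus: "feqv a b \<Longrightarrow> feqv c d \<Longrightarrow> feqv (fplus a c) (fplus b d)"
  unfolding fplus_def by (intro feqv_Imp feqv_Neg)

lemma prov_Delta_imp: "prov (Imp (Delta (\<lambda>i. Imp (as i) (bs i))) (Imp (Delta as) (Delta bs)))"
  by (rule prov_axiom, rule axiom.D7)

lemma prov_Delta_imp_rule: "(\<And>i. prov (Imp (as i) (bs i))) \<Longrightarrow> prov (Imp (Delta as) (Delta bs))"
  by (rule prov_mp[OF prov_Delta prov_Delta_imp])

lemma feqv_Delta: "(\<And>i. feqv (as i) (bs i)) \<Longrightarrow> feqv (Delta as) (Delta bs)"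
  unfolding feqv_def by (simp add: prov_Delta_imp_rule)

lemma feqv_of_prov: "prov a \<Longrightarrow> prov b \<Longrightarrow> feqv a b"
  unfolding feqv_def by (meson prov_weaken prov_mp)

lemma feqv_imp_of_prov: "prov p \<Longrightarrow> feqv (Imp p x) x"
  unfolding feqv_def by (simp add: prov_imp_of_prov prov_weaken)

lemma feqv_fplus_of_prov: "prov b \<Longrightarrow> feqv (fplus a b) b"
  unfolding fplus_def by (intro feqv_of_prov prov_mp[OF _ prov_weaken])

lemma prov_Neg_fzero: "prov (Neg (fzero a))"
  unfolding fzero_def by (rule prov_mp[OF prov_imp_refl prov_dneg_intro])

lemma feqv_dneg: "feqv (Neg (Neg a)) a"
  by (simp add: feqv_def prov_dneg_elim prov_dneg_intro)

lemma feqv_exchange: "feqv (Imp a (Imp b c)) (Imp b (Imp a c))"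
  by (simp add: feqv_def prov_exchange)

lemma feqv_luk: "feqv (Imp (Imp a b) b) (Imp (Imp b a) a)"
  by (simp add: feqv_def prov_luk)

lemma feqv_mv_join: "feqv (fplus (Neg (fplus (Neg a) b)) b) (Imp (Imp a b) b)"
  unfolding fplus_def
  by (intro feqv_Imp feqv_refl feqv_trans[OF feqv_dneg] feqv_dneg)

lemma feqv_mv_join_commute:
  "feqv (fplus (Neg (fplus (Neg a) b)) b) (fplus (Neg (fplus (Neg b) a)) a)"
  by (meson feqv_mv_join feqv_luk feqv_sym feqv_trans)

lemma prov_fplus_commute: "prov (Imp (fplus a b) (fplus b a))"
  unfolding fplus_def
  using prov_contrapos prov_prefix_rule[OF prov_dneg_elim] by (rule prov_imp_trans)

lemma feqv_fplus_commute: "feqv (fplus a b) (fplus b a)"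
  by (simp add: feqv_def prov_fplus_commute)

lemma feqv_fplus_assoc: "feqv (fplus (fplus a b) c) (fplus a (fplus b c))"
proof -
  have "feqv (fplus (fplus a b) c) (fplus c (fplus a b))"
    by (rule feqv_fplus_commute)
  also have "feqv \<dots> (fplus a (fplus c b))"
    unfolding fplus_def by (rule feqv_exchange)
  also have "feqv \<dots> (fplus a (fplus b c))"
    by (intro feqv_fplus feqv_refl feqv_fplus_commute)
  finally show ?thesis .
qed

lemma feqv_fplus_Neg_of_prov: "prov t \<Longrightarrow> feqv (fplus a (Neg t)) a"
  unfolding feqv_def fplus_def
  using prov_imp_trans[OF prov_Neg_contrapos prov_imp_of_prov]
    prov_imp_trans[OF prov_weaken prov_contrapos] by blast

section \<open>The quotient algebra\<close>

lemma fclass_eq_iff: "fclass a = fclass b \<longleftrightarrow> feqv a b"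
  unfolding fclass_def using eq_equiv_class_iff[OF equiv_feqv_rel] by (simp add: feqv_rel_def)

lemma feqv_frep_fclass: "feqv (frep (fclass a)) a"
proof -
  have "a \<in> fclass a" by (simp add: fclass_def feqv_rel_def feqv_refl)
  then have "frep (fclass a) \<in> fclass a" unfolding frep_def by (rule someI)
  then show ?thesis by (simp add: fclass_def feqv_rel_def feqv_sym)
qed

lemma fclass_in_Q_carrier: "fclass a \<in> Q_carrier"
  unfolding Q_carrier_def fclass_def by (rule quotientI) simp

lemma fclass_frep:
  assumes "X \<in> Q_carrier"
  shows "fclass (frep X) = X"
proof -
  obtain a where "X = fclass a"
    using assms unfolding Q_carrier_def fclass_def by (auto elim: quotientE)
  then show ?thesis by (simp add: fclass_eq_iff feqv_frep_fclass)
qed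

lemma Q_carrierE: "X \<in> Q_carrier \<Longrightarrow> (\<And>a. X = fclass a \<Longrightarrow> P) \<Longrightarrow> P"
  using fclass_frep by metis

lemma Q_carrier_seqE:
  assumes "\<forall>i. X i \<in> Q_carrier"
  obtains as where "X = (\<lambda>i. fclass (as i))"
  using assms fclass_frep by (metis ext)

lemma Q_plus_fclass [simp]: "Q_plus (fclass a) (fclass b) = fclass (fplus a b)"
  unfolding Q_plus_def fclass_eq_iff by (intro feqv_fplus feqv_frep_fclass)

lemma Q_neg_fclass [simp]: "Q_neg (fclass a) = fclass (Neg a)"
  unfolding Q_neg_def fclass_eq_iff by (intro feqv_Neg feqv_frep_fclass)

lemma Q_delta_eq_fclass: "(\<And>i. Xs i = fclass (as i)) \<Longrightarrow> Q_delta Xs = fclass (Delta as)"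
  unfolding Q_delta_def fclass_eq_iff by (intro feqv_Delta) (simp add: feqv_frep_fclass)

lemma Q_delta_fclass [simp]: "Q_delta (\<lambda>i. fclass (as i)) = fclass (Delta as)"
  by (rule Q_delta_eq_fclass) simp

lemma Q_zero_fclass: "Q_zero a0 = fclass (Neg (Imp a a))"
  unfolding Q_zero_def fzero_def fclass_eq_iff
  by (intro feqv_Neg feqv_of_prov prov_imp_refl)

lemma Q_half_fclass [simp]:
  "Q_delta (\<lambda>i. if i = 0 then fclass a else Q_zero a0) = fclass (fhalf a)"
  unfolding fhalf_def by (rule Q_delta_eq_fclass) (simp add: Q_zero_fclass[of a0 a])

lemma Q_minus_fclass [simp]:
  "mv_minus Q_plus Q_neg (fclass a) (fclass b) = fclass (Neg (Imp a b))"
  unfolding mv_minus_def fplus_def fclass_eq_iff Q_plus_fclass Q_neg_fclass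
  by (intro feqv_Neg feqv_Imp feqv_dneg)

lemma mv_algebra_Q: "mv_algebra Q_carrier Q_plus Q_neg (Q_zero a0)"
  unfolding mv_algebra_def
proof (intro conjI ballI)
  show "Q_zero a0 \<in> Q_carrier"
    by (simp add: Q_zero_def fclass_in_Q_carrier)
next
  fix X Y assume "X \<in> Q_carrier" "Y \<in> Q_carrier"
  then show "Q_plus X Y \<in> Q_carrier"
    by (elim Q_carrierE) (simp add: fclass_in_Q_carrier)
next
  fix X assume "X \<in> Q_carrier"
  then show "Q_neg X \<in> Q_carrier"
    by (elim Q_carrierE) (simp add: fclass_in_Q_carrier)
next
  fix X Y Z assume "X \<in> Q_carrier" "Y \<in> Q_carrier" "Z \<in> Q_carrier"
  then show "Q_plus (Q_plus X Y) Z = Q_plus X (Q_plus Y Z)"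
    by (elim Q_carrierE) (simp add: fclass_eq_iff feqv_fplus_assoc)
next
  fix X Y assume "X \<in> Q_carrier" "Y \<in> Q_carrier"
  then show "Q_plus X Y = Q_plus Y X"
    by (elim Q_carrierE) (simp add: fclass_eq_iff feqv_fplus_commute)
next
  fix X assume "X \<in> Q_carrier"
  then show "Q_plus X (Q_zero a0) = X"
    by (elim Q_carrierE)
      (simp add: Q_zero_def fzero_def fclass_eq_iff feqv_fplus_Neg_of_prov prov_imp_refl)
next
  fix X assume "X \<in> Q_carrier"
  then show "Q_neg (Q_neg X) = X"
    by (elim Q_carrierE) (simp add: fclass_eq_iff feqv_dneg)
next
  fix X assume "X \<in> Q_carrier"
  then show "Q_plus X (Q_neg (Q_zero a0)) = Q_neg (Q_zero a0)"
    by (elim Q_carrierE)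
      (simp add: Q_zero_def fclass_eq_iff feqv_fplus_of_prov prov_Neg_fzero)
next
  fix X Y assume "X \<in> Q_carrier" "Y \<in> Q_carrier"
  then show "Q_plus (Q_neg (Q_plus (Q_neg X) Y)) Y = Q_plus (Q_neg (Q_plus (Q_neg Y) X)) X"
    by (elim Q_carrierE) (simp add: fclass_eq_iff feqv_mv_join_commute)
qed

section \<open>The \<open>\<delta>\<close>-axioms in the quotient\<close>

lemma feqv_of_Iff_axs: "(\<And>f. f \<in> Iff_axs a b \<Longrightarrow> axiom f) \<Longrightarrow> feqv a b"
  by (simp add: feqv_def Iff_axs_def prov_axiom)

lemma feqv_Neg_Imp_Delta_fhalf:
  "feqv (Neg (Imp (Delta as) (fhalf (as 0)))) (fhalf (Delta (\<lambda>i. as (Suc i))))"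
  by (rule feqv_of_Iff_axs, rule axiom.D1[where as = as])

lemma feqv_fhalf_Delta: "feqv (fhalf (Delta as)) (Delta (\<lambda>i. fhalf (as i)))"
  by (rule feqv_of_Iff_axs, rule axiom.D2[where as = as])

lemma feqv_Delta_const: "feqv (Delta (\<lambda>i. a)) a"
  by (rule feqv_of_Iff_axs, rule axiom.D3[where a = a])

lemma feqv_fhalf_Delta_shift:
  "feqv (fhalf (Delta as)) (Delta (\<lambda>i. if i = 0 then Neg (Imp a a) else as (i - 1)))"
  by (rule feqv_of_Iff_axs, rule axiom.D4[where as = as and a = a])

lemma prov_Delta_fplus: "prov (Imp (Delta as) (Delta (\<lambda>i. fplus (as i) (bs i))))"
  unfolding fplus_def by (rule prov_axiom, rule axiom.D5)

lemma feqv_fhalf_Neg_Imp: "feqv (fhalf (Neg (Imp a b))) (Neg (Imp (fhalf a) (fhalf b)))"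
  by (rule feqv_of_Iff_axs, rule axiom.D6[where a = a and b = b])

text \<open>(\<Delta>5) applied to \<open>\<onehalf>\<alpha>\<^sub>1 = \<delta>(\<alpha>\<^sub>1, 0, 0, \<dots>)\<close>, with \<open>\<beta>\<^sub>1 = 0\<close> and \<open>\<beta>\<^sub>i = \<alpha>\<^sub>i\<close> for \<open>i > 1\<close>.\<close>

lemma prov_fhalf_imp_Delta: "prov (Imp (fhalf (as 0)) (Delta as))"
proof -
  let ?c = "as 0"
  let ?zero = "Neg (Imp ?c ?c)"
  let ?s = "\<lambda>i::nat. if i = 0 then ?c else ?zero"
  let ?bs = "\<lambda>i::nat. if i = 0 then ?zero else as i"
  have "feqv (fplus (?s i) (?bs i)) (as i)" for i
  proof (cases "i = 0")
    case True
    then show ?thesis using feqv_fplus_Neg_of_prov[OF prov_imp_refl] by simp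
  next
    case False
    then show ?thesis
      using feqv_imp_of_prov[OF prov_Neg_fzero[unfolded fzero_def]] by (simp add: fplus_def)
  qed
  then have "prov (Imp (Delta (\<lambda>i. fplus (?s i) (?bs i))) (Delta as))"
    unfolding feqv_def by (simp add: prov_Delta_imp_rule)
  with prov_Delta_fplus have "prov (Imp (Delta ?s) (Delta as))"
    by (rule prov_imp_trans)
  then show ?thesis by (simp add: fhalf_def)
qed

lemma feqv_dist_Delta_fhalf:
  "feqv (fplus (Neg (Imp (Delta as) (fhalf (as 0)))) (Neg (Imp (fhalf (as 0)) (Delta as))))
        (Delta (\<lambda>i. if i = 0 then fzero a0 else as i))"
proof -
  let ?D = "Delta (\<lambda>i. as (Suc i))"
  have "feqv (fplus (Neg (Imp (Delta as) (fhalf (as 0)))) (Neg (Imp (fhalf (as 0)) (Delta as))))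
             (fplus (fhalf ?D) (Neg (Imp a0 a0)))"
    by (intro feqv_fplus feqv_Neg_Imp_Delta_fhalf feqv_Neg feqv_of_prov
        prov_fhalf_imp_Delta prov_imp_refl)
  also have "feqv \<dots> (fhalf ?D)"
    by (rule feqv_fplus_Neg_of_prov[OF prov_imp_refl])
  also have "feqv \<dots> (Delta (\<lambda>i. if i = 0 then Neg (Imp a0 a0) else as (Suc (i - 1))))"
    by (rule feqv_fhalf_Delta_shift)
  also have "(\<lambda>i. if i = 0 then Neg (Imp a0 a0) else as (Suc (i - 1)))
           = (\<lambda>i. if i = 0 then fzero a0 else as i)"
    by (auto simp: fzero_def)
  finally show ?thesis .
qed

lemma feqv_join_of_prov_imp: "prov (Imp a b) \<Longrightarrow> feqv (fplus (Neg (fplus (Neg a) b)) b) b"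
  using feqv_mv_join feqv_imp_of_prov by (rule feqv_trans)

lemma delta_algebra_Q: "delta_algebra Q_carrier Q_delta Q_plus Q_neg (Q_zero a0)"
  unfolding delta_algebra_def Let_def
proof (intro conjI allI impI ballI)
  show "mv_algebra Q_carrier Q_plus Q_neg (Q_zero a0)"
    by (rule mv_algebra_Q)
next
  fix X :: "nat \<Rightarrow> form set"
  show "Q_delta X \<in> Q_carrier"
    by (simp add: Q_delta_def fclass_in_Q_carrier)
next
  fix X :: "nat \<Rightarrow> form set" assume "\<forall>i. X i \<in> Q_carrier"
  then obtain as where X: "X = (\<lambda>i. fclass (as i))" by (rule Q_carrier_seqE)
  have "Q_delta (\<lambda>i. if i = 0 then Q_zero a0 else fclass (as i))
      = fclass (Delta (\<lambda>i. if i = 0 then fzero a0 else as i))"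
    by (rule Q_delta_eq_fclass) (simp add: Q_zero_def)
  then show "mv_dist Q_plus Q_neg (Q_delta X) (Q_delta (\<lambda>i. if i = 0 then X 0 else Q_zero a0))
           = Q_delta (\<lambda>i. if i = 0 then Q_zero a0 else X i)"
    unfolding X mv_dist_def by (simp add: fclass_eq_iff feqv_dist_Delta_fhalf)
next
  fix X :: "nat \<Rightarrow> form set" assume "\<forall>i. X i \<in> Q_carrier"
  then obtain as where X: "X = (\<lambda>i. fclass (as i))" by (rule Q_carrier_seqE)
  show "Q_delta (\<lambda>i. if i = 0 then Q_delta X else Q_zero a0)
      = Q_delta (\<lambda>i. Q_delta (\<lambda>j. if j = 0 then X i else Q_zero a0))"
    unfolding X Q_delta_fclass by (simp add: fclass_eq_iff feqv_fhalf_Delta)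
next
  fix X assume "X \<in> Q_carrier"
  then show "Q_delta (\<lambda>i. X) = X"
    by (elim Q_carrierE) (simp add: fclass_eq_iff feqv_Delta_const)
next
  fix X :: "nat \<Rightarrow> form set" assume "\<forall>i. X i \<in> Q_carrier"
  then obtain as where X: "X = (\<lambda>i. fclass (as i))" by (rule Q_carrier_seqE)
  have "Q_delta (\<lambda>i. if i = 0 then Q_zero a0 else fclass (as (i - 1)))
      = fclass (Delta (\<lambda>i. if i = 0 then Neg (Imp a0 a0) else as (i - 1)))"
    by (rule Q_delta_eq_fclass) (simp add: Q_zero_def fzero_def)
  then show "Q_delta (\<lambda>i. if i = 0 then Q_zero a0 else X (i - 1))
           = Q_delta (\<lambda>i. if i = 0 then Q_delta X else Q_zero a0)"
    unfolding X Q_delta_fclass by (simp add: fclass_eq_iff feqv_sym[OF feqv_fhalf_Delta_shift])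
next
  fix X Y :: "nat \<Rightarrow> form set"
  assume "\<forall>i. X i \<in> Q_carrier" "\<forall>i. Y i \<in> Q_carrier"
  then obtain as bs where X: "X = (\<lambda>i. fclass (as i))" and Y: "Y = (\<lambda>i. fclass (bs i))"
    by (metis Q_carrier_seqE)
  show "mv_le Q_plus Q_neg (Q_delta X) (Q_delta (\<lambda>i. Q_plus (X i) (Y i)))"
    unfolding X Y mv_le_def mv_join_def
    by (simp add: fclass_eq_iff feqv_join_of_prov_imp prov_Delta_fplus)
next
  fix X Y assume "X \<in> Q_carrier" "Y \<in> Q_carrier"
  then show "Q_delta (\<lambda>i. if i = 0 then mv_minus Q_plus Q_neg X Y else Q_zero a0)
           = mv_minus Q_plus Q_neg (Q_delta (\<lambda>i. if i = 0 then X else Q_zero a0))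
               (Q_delta (\<lambda>i. if i = 0 then Y else Q_zero a0))"
    by (elim Q_carrierE, hypsubst)
      (simp only: Q_minus_fclass Q_half_fclass fclass_eq_iff feqv_fhalf_Neg_Imp)
qed

theorem mainTheorem11:
  fixes a0 :: form
  shows "(equiv UNIV feqv_rel \<and>
          (\<forall>a b c d. feqv a b \<longrightarrow> feqv c d \<longrightarrow> feqv (fplus a c) (fplus b d)) \<and>
          (\<forall>a b. feqv a b \<longrightarrow> feqv (Neg a) (Neg b)) \<and>
          feqv (fzero a0) (fzero a0) \<and>
          (\<forall>as bs. (\<forall>i. feqv (as i) (bs i)) \<longrightarrow> feqv (Delta as) (Delta bs)))
       \<and> delta_algebra Q_carrier Q_delta Q_plus Q_neg (Q_zero a0)"
  by (simp add: equiv_feqv_rel feqv_fplus feqv_Neg feqv_refl feqv_Delta delta_algebra_Q)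

end
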